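(* For any two points $x,y\in\mathbb{R}^n$, the pair $(\{x\},\{y\})$ is an $\mathcal{S}_n$-cute pair, and the pair $(x+B_2^n,\,y+B_2^n)$ is an $\mathcal{S}_n$-cute pair.
   Context: Convex bodies are compact convex non-empty subsets of $\mathbb{R}^n$; $B_2^n$ is the closed Euclidean unit ball; $\delta$ is the Hausdorff distance $\delta(K_0,K_1)=\inf\{\lambda>0: K_0\subseteq K_1+\lambda B_2^n,\ K_1\subseteq K_0+\lambda B_2^n\}$. $\mathcal{S}_n$ is the set of convex bodies in $\mathbb{R}^n$ which are intersections of Euclidean unit balls. A pair $(K_0,K_1)\in\mathcal{S}_n\times\mathcal{S}_n$ is called $\mathcal{S}_n$-cute if $M=\frac{K_0+K_1}{2}$ is the unique body in $\mathcal{S}_n$ satisfying $\delta(K_0,M)=\frac12\delta(K_0,K_1)$ and $\delta(K_1,M)=\frac12\delta(K_0,K_1)$. *)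

theory Defs
  imports "HOL-Analysis.Analysis"
begin

definition convex_body :: "'a::euclidean_space set \<Rightarrow> bool" where
  "convex_body K \<longleftrightarrow> compact K \<and> convex K \<and> K \<noteq> {}"

definition hdist :: "'a::euclidean_space set \<Rightarrow> 'a set \<Rightarrow> real" where
  "hdist K0 K1 = Inf {r. r > 0 \<and> K0 \<subseteq> {a + b | a b. a \<in> K1 \<and> b \<in> cball 0 r} \<and> K1 \<subseteq> {a + b | a b. a \<in> K0 \<and> b \<in> cball 0 r}}"

definition S_set :: "'a::euclidean_space set set" where
  "S_set = {K. convex_body K \<and> (\<exists>C. K = (\<Inter>c\<in>C. cball c 1))}"

definition half_sum :: "'a::euclidean_space set \<Rightarrow> 'a set \<Rightarrow> 'a set" where
  "half_sum K0 K1 = {(1/2::real) *\<^sub>R (a + b) | a b. a \<in> K0 \<and> b \<in> K1}"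

definition S_cute :: "'a::euclidean_space set \<Rightarrow> 'a set \<Rightarrow> bool" where
  "S_cute K0 K1 \<longleftrightarrow> K0 \<in> S_set \<and> K1 \<in> S_set \<and>
     (let M = half_sum K0 K1; d = hdist K0 K1 in
        M \<in> S_set \<and> hdist K0 M = d / 2 \<and> hdist K1 M = d / 2 \<and>
        (\<forall>N\<in>S_set. hdist K0 N = d / 2 \<and> hdist K1 N = d / 2 \<longrightarrow> N = M))"

end

theory Submission
  imports Defs
begin

text \<open>Both pairs are of the form \<open>cball x s, cball y s\<close> with \<open>s = 0\<close> or \<open>s = 1\<close>. For such balls the
  Hausdorff distance is \<open>d = dist x y\<close> and the half sum is \<open>cball (midpoint x y) s\<close>, at distance
  \<open>d/2\<close> from both. Uniqueness rests on the midpoint being the only point within \<open>d/2\<close> of both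
  \<open>x\<close> and \<open>y\<close>: a body \<open>N\<close> at distance \<open>d/2\<close> from \<open>{x}\<close> and \<open>{y}\<close> lies in
  \<open>cball x (d/2) \<inter> cball y (d/2)\<close>; and if \<open>N = (\<Inter>c\<in>C. cball c 1)\<close> is at distance \<open>d/2\<close> from both
  unit balls, then \<open>cball x 1 \<subseteq> N + (d/2) B \<subseteq> cball c (1 + d/2)\<close> for each \<open>c \<in> C\<close>, so every
  centre in \<open>C\<close> is the midpoint.\<close>

definition parallel_body :: "'a::euclidean_space set \<Rightarrow> real \<Rightarrow> 'a set" where
  "parallel_body A r = {a + b | a b. a \<in> A \<and> b \<in> cball 0 r}"

lemma hdist_eq_Inf_parallel_body:
  "hdist A B = Inf {r. r > 0 \<and> A \<subseteq> parallel_body B r \<and> B \<subseteq> parallel_body A r}"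
  unfolding hdist_def parallel_body_def by simp

lemma parallel_body_mono: "A \<subseteq> B \<Longrightarrow> r \<le> s \<Longrightarrow> parallel_body A r \<subseteq> parallel_body B s"
  unfolding parallel_body_def by fastforce

lemma parallel_body_cball:
  fixes p :: "'a::euclidean_space"
  assumes "s \<ge> 0" "r \<ge> 0"
  shows "parallel_body (cball p s) r = cball p (s + r)"
proof
  show "parallel_body (cball p s) r \<subseteq> cball p (s + r)"
  proof
    fix z assume "z \<in> parallel_body (cball p s) r"
    then obtain a b where "z = a + b" "dist p a \<le> s" "norm b \<le> r"
      unfolding parallel_body_def by auto
    then have "dist p z \<le> dist p a + norm b"
      using dist_triangle[of p z a] by (simp add: dist_norm)
    then show "z \<in> cball p (s + r)" using \<open>dist p a \<le> s\<close> \<open>norm b \<le> r\<close> by simp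
  qed
next
  show "cball p (s + r) \<subseteq> parallel_body (cball p s) r"
  proof
    fix z assume z: "z \<in> cball p (s + r)"
    show "z \<in> parallel_body (cball p s) r"
    proof (cases "s + r = 0")
      case True
      then have "z = p + 0" using z assms by simp
      then show ?thesis using assms unfolding parallel_body_def by fastforce
    next
      case False
      define t where "t = s / (s + r)"
      have t: "0 \<le> t" "t \<le> 1" "1 - t = r / (s + r)"
        using assms False by (auto simp: t_def field_simps)
      have decomp: "z = (p + t *\<^sub>R (z - p)) + (1 - t) *\<^sub>R (z - p)"
        by (simp add: algebra_simps)
      have "norm (z - p) \<le> s + r" using z by (simp add: dist_norm norm_minus_commute)
      then have "t * norm (z - p) \<le> t * (s + r)" "(1 - t) * norm (z - p) \<le> (1 - t) * (s + r)"
        using t(1,2) by (auto intro: mult_left_mono)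
      moreover have "t * (s + r) = s" "(1 - t) * (s + r) = r" using False t by (simp_all add: t_def)
      ultimately have "norm (t *\<^sub>R (z - p)) \<le> s" "norm ((1 - t) *\<^sub>R (z - p)) \<le> r"
        using t(1,2) by simp_all
      with decomp show ?thesis
        unfolding parallel_body_def by (fastforce simp: dist_norm)
    qed
  qed
qed

lemma parallel_body_singleton: "r \<ge> 0 \<Longrightarrow> parallel_body {p} r = cball p r"
  using parallel_body_cball[of 0 r p] by simp

lemma bounded_subset_parallel_body:
  assumes "bounded A" "B \<noteq> {}"
  obtains r where "r > 0" "A \<subseteq> parallel_body B r"
proof -
  obtain b where "b \<in> B" using assms(2) by blast
  obtain r where "r > 0" "A \<subseteq> ball b r" using bounded_subset_ballD[OF assms(1)] by blast
  then have "A \<subseteq> parallel_body {b} r" by (auto simp: parallel_body_singleton)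
  also have "\<dots> \<subseteq> parallel_body B r" using \<open>b \<in> B\<close> by (intro parallel_body_mono) auto
  finally show ?thesis using that \<open>r > 0\<close> by blast
qed

lemma ex_mutual_parallel_body_radius:
  assumes "bounded A" "bounded B" "A \<noteq> {}" "B \<noteq> {}"
  obtains r where "r > 0" "A \<subseteq> parallel_body B r" "B \<subseteq> parallel_body A r"
proof -
  obtain r1 r2 where "r1 > 0" "A \<subseteq> parallel_body B r1" "r2 > 0" "B \<subseteq> parallel_body A r2"
    using assms bounded_subset_parallel_body by metis
  then show ?thesis
    using that[of "max r1 r2"]
      parallel_body_mono[of A A r2 "max r1 r2"] parallel_body_mono[of B B r1 "max r1 r2"]
    by auto
qed

lemma hdist_nonneg:
  assumes "bounded A" "bounded B" "A \<noteq> {}" "B \<noteq> {}"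
  shows "hdist A B \<ge> 0"
proof -
  obtain r where "r > 0" "A \<subseteq> parallel_body B r" "B \<subseteq> parallel_body A r"
    using ex_mutual_parallel_body_radius[OF assms] .
  then show ?thesis
    unfolding hdist_eq_Inf_parallel_body by (intro cInf_greatest) auto
qed

lemma hdist_less_imp_subset_parallel_body:
  assumes "bounded A" "bounded B" "A \<noteq> {}" "B \<noteq> {}" "hdist A B < r"
  shows "A \<subseteq> parallel_body B r" "B \<subseteq> parallel_body A r"
proof -
  let ?R = "{r. r > 0 \<and> A \<subseteq> parallel_body B r \<and> B \<subseteq> parallel_body A r}"
  obtain r0 where "r0 > 0" "A \<subseteq> parallel_body B r0" "B \<subseteq> parallel_body A r0"
    using ex_mutual_parallel_body_radius[OF assms(1-4)] .
  then have "r0 \<in> ?R" by simp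
  then have "?R \<noteq> {}" by (metis empty_iff)
  from cInf_lessD[OF this] have "\<exists>r'\<in>?R. r' < r"
    using assms(5) unfolding hdist_eq_Inf_parallel_body .
  then obtain r' where "r' \<in> ?R" "r' < r" ..
  then show "A \<subseteq> parallel_body B r" "B \<subseteq> parallel_body A r"
    using parallel_body_mono[of A A r' r] parallel_body_mono[of B B r' r] by auto
qed

lemma hdist_cball_cball:
  fixes p q :: "'a::euclidean_space"
  assumes "s \<ge> 0"
  shows "hdist (cball p s) (cball q s) = dist p q"
proof -
  have "cball a s \<subseteq> parallel_body (cball b s) r \<longleftrightarrow> dist a b \<le> r" if "r > 0" for a b r
    using assms that by (simp add: parallel_body_cball cball_subset_cball_iff)
  then have "hdist (cball p s) (cball q s) = Inf {r. r > 0 \<and> dist p q \<le> r}"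
    unfolding hdist_eq_Inf_parallel_body by (metis dist_commute)
  also have "\<dots> = dist p q"
  proof (cases "p = q")
    case True
    then have "{r. r > 0 \<and> dist p q \<le> r} = {0<..}" by auto
    then show ?thesis using True by simp
  next
    case False
    then have "{r. r > 0 \<and> dist p q \<le> r} = {dist p q..}"
      by (auto intro: less_le_trans[OF dist_pos_lt])
    then show ?thesis by simp
  qed
  finally show ?thesis .
qed

lemma eq_midpoint_if_dist_le_half:
  fixes a b c :: "'a::euclidean_space"
  assumes "dist a b \<le> dist a c / 2" "dist b c \<le> dist a c / 2"
  shows "b = midpoint a c"
proof -
  have "dist a c \<le> dist a b + dist b c" by (rule dist_triangle)
  then have "dist a b = dist a c / 2" "dist b c = dist a c / 2" using assms by linarith+
  then show ?thesis by (simp add: midpoint_between between)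
qed

lemma half_sum_eq_midpoints: "half_sum A B = {midpoint a b | a b. a \<in> A \<and> b \<in> B}"
  by (simp add: half_sum_def midpoint_def)

lemma half_sum_cball:
  fixes x y :: "'a::euclidean_space"
  assumes "s \<ge> 0"
  shows "half_sum (cball x s) (cball y s) = cball (midpoint x y) s"
proof
  show "half_sum (cball x s) (cball y s) \<subseteq> cball (midpoint x y) s"
  proof
    fix z assume "z \<in> half_sum (cball x s) (cball y s)"
    then obtain a b where ab: "z = midpoint a b" "dist x a \<le> s" "dist y b \<le> s"
      unfolding half_sum_eq_midpoints by auto
    have "midpoint x y - z = (1/2) *\<^sub>R ((x - a) + (y - b))"
      using ab(1) by (simp add: midpoint_def algebra_simps)
    then have "dist (midpoint x y) z = norm ((x - a) + (y - b)) / 2"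
      by (simp add: dist_norm)
    also have "\<dots> \<le> (norm (x - a) + norm (y - b)) / 2"
      using norm_triangle_ineq by (simp add: divide_right_mono)
    also have "\<dots> \<le> s" using ab by (simp add: dist_norm)
    finally show "z \<in> cball (midpoint x y) s" by simp
  qed
next
  show "cball (midpoint x y) s \<subseteq> half_sum (cball x s) (cball y s)"
  proof
    fix z assume z: "z \<in> cball (midpoint x y) s"
    define w where "w = z - midpoint x y"
    have "x + w \<in> cball x s" "y + w \<in> cball y s"
      using z by (auto simp: w_def dist_norm norm_minus_commute)
    moreover have "(x + w) + (y + w) = z + z"
      using midpoint_plus_self[of x y] by (simp add: w_def algebra_simps)
    then have "midpoint (x + w) (y + w) = z" unfolding midpoint_eq_iff .
    ultimately show "z \<in> half_sum (cball x s) (cball y s)"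
      unfolding half_sum_eq_midpoints by force
  qed
qed

lemma cball_in_S_set: "cball (p::'a::euclidean_space) 1 \<in> S_set"
  unfolding S_set_def convex_body_def by (auto intro!: exI[of _ "{p}"])

lemma singleton_in_S_set: "{p::'a::euclidean_space} \<in> S_set"
proof -
  have "z = p" if z: "z \<in> (\<Inter>c\<in>sphere p 1. cball c 1)" for z
  proof (rule ccontr)
    assume "z \<noteq> p"
    define t where "t = norm (p - z)"
    have "t > 0" using \<open>z \<noteq> p\<close> by (simp add: t_def)
    \<comment> \<open>the point of the unit sphere around \<open>p\<close> diametrically opposite to \<open>z\<close>\<close>
    define c where "c = p + (1 / t) *\<^sub>R (p - z)"
    have "c - z = (1 + 1 / t) *\<^sub>R (p - z)" by (simp add: c_def algebra_simps)
    then have "dist c z = (1 + 1 / t) * t"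
      using \<open>t > 0\<close> by (simp add: dist_norm flip: t_def)
    also have "\<dots> = 1 + t" using \<open>t > 0\<close> by (simp add: field_simps)
    finally have "dist c z = 1 + t" .
    moreover have "c \<in> sphere p 1" using \<open>t > 0\<close> by (simp add: c_def dist_norm flip: t_def)
    then have "z \<in> cball c 1" using z by blast
    then have "dist c z \<le> 1" by simp
    ultimately show False using \<open>t > 0\<close> by linarith
  qed
  then have "{p} = (\<Inter>c\<in>sphere p 1. cball c 1)" by (auto simp: dist_commute)
  moreover have "compact {p}" "convex {p}" by auto
  ultimately show ?thesis unfolding S_set_def convex_body_def by blast
qed

lemma S_set_bounded: "N \<in> S_set \<Longrightarrow> bounded N \<and> N \<noteq> {}"
  unfolding S_set_def convex_body_def using compact_imp_bounded by blast

lemma subset_cball_if_hdist_singleton_le: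
  fixes p :: "'a::euclidean_space"
  assumes "bounded N" "N \<noteq> {}" "hdist {p} N \<le> d"
  shows "N \<subseteq> cball p d"
proof
  fix n assume "n \<in> N"
  have "d \<ge> 0" using hdist_nonneg[of "{p}" N] assms by simp
  have "dist p n \<le> d + e" if "e > 0" for e
  proof -
    have "N \<subseteq> parallel_body {p} (d + e)"
      using assms \<open>e > 0\<close> by (intro hdist_less_imp_subset_parallel_body) auto
    then show ?thesis using \<open>n \<in> N\<close> \<open>d \<ge> 0\<close> \<open>e > 0\<close> by (auto simp: parallel_body_singleton)
  qed
  then show "n \<in> cball p d" by (auto intro: field_le_epsilon)
qed

lemma dist_le_if_hdist_cball_le:
  fixes p c :: "'a::euclidean_space"
  assumes "bounded N" "N \<noteq> {}" "N \<subseteq> cball c s" "s \<ge> 0" "hdist (cball p s) N \<le> d"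
  shows "dist p c \<le> d"
proof (rule field_le_epsilon)
  fix e :: real assume "e > 0"
  have "d \<ge> 0" using hdist_nonneg[of "cball p s" N] assms by simp
  have "cball p s \<subseteq> parallel_body N (d + e)"
    using assms \<open>e > 0\<close> by (intro hdist_less_imp_subset_parallel_body) auto
  also have "\<dots> \<subseteq> parallel_body (cball c s) (d + e)"
    using assms(3) by (rule parallel_body_mono) simp
  also have "\<dots> = cball c (s + (d + e))"
    using \<open>s \<ge> 0\<close> \<open>d \<ge> 0\<close> \<open>e > 0\<close> by (simp add: parallel_body_cball)
  finally show "dist p c \<le> d + e"
    using \<open>s \<ge> 0\<close> by (simp add: cball_subset_cball_iff)
qed

lemma S_set_at_half_distance_from_points:
  fixes x y :: "'a::euclidean_space"
  assumes "N \<in> S_set" "hdist {x} N = dist x y / 2" "hdist {y} N = dist x y / 2"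
  shows "N = {midpoint x y}"
proof -
  have N: "bounded N" "N \<noteq> {}" using S_set_bounded[OF assms(1)] by auto
  have "N \<subseteq> cball x (dist x y / 2)" "N \<subseteq> cball y (dist x y / 2)"
    using subset_cball_if_hdist_singleton_le[OF N order_eq_refl] assms(2,3) by blast+
  then have "n = midpoint x y" if "n \<in> N" for n
    using that by (intro eq_midpoint_if_dist_le_half) (auto simp: dist_commute)
  then show ?thesis using N by blast
qed

lemma S_set_at_half_distance_from_unit_balls:
  fixes x y :: "'a::euclidean_space"
  assumes "N \<in> S_set" "hdist (cball x 1) N = dist x y / 2" "hdist (cball y 1) N = dist x y / 2"
  shows "N = cball (midpoint x y) 1"
proof -
  have N: "bounded N" "N \<noteq> {}" using S_set_bounded[OF assms(1)] by auto
  obtain C where C: "N = (\<Inter>c\<in>C. cball c 1)" using assms(1) unfolding S_set_def by auto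
  have "c = midpoint x y" if "c \<in> C" for c
  proof -
    have "N \<subseteq> cball c 1" using C that by auto
    then have "dist x c \<le> dist x y / 2" "dist y c \<le> dist x y / 2"
      using dist_le_if_hdist_cball_le[OF N _ zero_le_one order_eq_refl] assms(2,3) by blast+
    then show ?thesis by (intro eq_midpoint_if_dist_le_half) (auto simp: dist_commute)
  qed
  moreover have "C \<noteq> {}" using C N(1) by auto
  ultimately have "C = {midpoint x y}" by blast
  then show ?thesis using C by simp
qed

lemma S_cute_cball_cballI:
  fixes x y :: "'a::euclidean_space"
  assumes "s \<ge> 0" "\<And>p :: 'a. cball p s \<in> S_set"
    and "\<And>N. N \<in> S_set \<Longrightarrow> hdist (cball x s) N = dist x y / 2 \<Longrightarrow>
      hdist (cball y s) N = dist x y / 2 \<Longrightarrow> N = cball (midpoint x y) s"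
  shows "S_cute (cball x s) (cball y s)"
  unfolding S_cute_def Let_def
  by (simp add: assms half_sum_cball hdist_cball_cball dist_midpoint)

theorem lemma5:
  fixes x y :: "'a::euclidean_space"
  shows "S_cute {x} {y} \<and> S_cute ((\<lambda>v. x + v) ` cball 0 1) ((\<lambda>v. y + v) ` cball 0 1)"
proof
  have "S_cute (cball x 0) (cball y 0)"
    using singleton_in_S_set S_set_at_half_distance_from_points
    by (intro S_cute_cball_cballI) auto
  then show "S_cute {x} {y}" by simp
  have "S_cute (cball x 1) (cball y 1)"
    using cball_in_S_set S_set_at_half_distance_from_unit_balls
    by (intro S_cute_cball_cballI) auto
  then show "S_cute ((\<lambda>v. x + v) ` cball 0 1) ((\<lambda>v. y + v) ` cball 0 1)"
    using cball_translation[of x 0 1] cball_translation[of y 0 1] by simp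
qed

end
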